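(* For any $k \ge 1$, the total number of binary words (of any length, including the empty word) that avoid $0^i1^{k-i}$ for all $i \in \{0,1,\dots,k\}$ is $C_{k+1} - 1$; equivalently $\sum_{m=0}^{2k-2} B(k,m) = C_{k+1}-1$, where $C_n=\frac{1}{n+1}\binom{2n}{n}$.
   Context: A binary word avoids a word $u$ if $u$ does not occur in it as a (not necessarily contiguous) subsequence. For $k\ge1$, $m \ge 0$, $B(k,m)$ is the number of such avoiding binary words of length $m$ (it is $0$ for $m \ge 2k-1$). *)

theory Defs
  imports Main "HOL-Library.Sublist"
begin

text \<open>Binary words are lists of booleans: letter 0 is False, letter 1 is True.
  subseq u w: u occurs in w as a (not necessarily contiguous) subsequence.\<close>

definition avoids :: "bool list \<Rightarrow> bool list \<Rightarrow> bool" where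
  "avoids w u \<longleftrightarrow> \<not> subseq u w"

definition zero_one_word :: "nat \<Rightarrow> nat \<Rightarrow> bool list" where
  "zero_one_word i j = replicate i False @ replicate j True"

definition avoid_all :: "nat \<Rightarrow> bool list \<Rightarrow> bool" where
  "avoid_all k w \<longleftrightarrow> (\<forall>i\<in>{0..k}. avoids w (zero_one_word i (k - i)))"

definition B :: "nat \<Rightarrow> nat \<Rightarrow> nat" where
  "B k m = card {w :: bool list. length w = m \<and> avoid_all k w}"

definition catalan :: "nat \<Rightarrow> nat" where
  "catalan n = ((2 * n) choose n) div (n + 1)"

end

theory Submission
  imports Defs
begin

text \<open>Recurse on the first letter: a word 0w avoids every 0^i 1^(k-i) iff w avoids every
  0^i 1^(k-1-i), and 1w does iff w does and 1w has fewer than k ones. Hence, if f(k,c) counts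
  the avoiding words with fewer than c ones, g = f + 1 satisfies Pascal's recurrence
  g(k,c) = g(k-1,c) + g(k,c-1). Its solution is the ballot number
  (k+1+c choose c) - (k+1+c choose c-1), which for c = k is the Catalan number C(k+1).\<close>

lemma subseq_replicate_iff: "subseq (replicate j x) w \<longleftrightarrow> j \<le> count_list w x"
proof (induction w arbitrary: j)
  case Nil
  then show ?case by (cases j) simp_all
next
  case (Cons y w)
  show ?case
  proof (cases j)
    case (Suc i)
    then show ?thesis using Cons.IH[of i] Cons.IH[of j] by (cases "x = y") simp_all
  qed simp
qed

lemma length_eq_count_False_True: "length w = count_list w False + count_list w True"
  by (induction w) auto

lemma zero_one_word_0: "zero_one_word 0 j = replicate j True"
  by (simp add: zero_one_word_def)

lemma subseq_zero_one_word_False_Cons: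
  "subseq (zero_one_word (Suc i) j) (False # w) \<longleftrightarrow> subseq (zero_one_word i j) w"
  by (simp add: zero_one_word_def subseq_Cons2_iff)

lemma subseq_zero_one_word_True_Cons:
  "subseq (zero_one_word (Suc i) j) (True # w) \<longleftrightarrow> subseq (zero_one_word (Suc i) j) w"
  by (simp add: zero_one_word_def subseq_Cons2_iff)

lemma avoid_all_iff:
  "avoid_all n w \<longleftrightarrow> count_list w True < n
     \<and> (\<forall>i<n. \<not> subseq (zero_one_word (Suc i) (n - Suc i)) w)"
proof -
  have "(\<forall>i\<in>{0..n}. P i) \<longleftrightarrow> P 0 \<and> (\<forall>i<n. P (Suc i))" for P :: "nat \<Rightarrow> bool"
    by (auto simp: less_Suc_eq_0_disj) (metis Suc_le_eq not0_implies_Suc)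
  then show ?thesis
    by (simp add: avoid_all_def avoids_def zero_one_word_0 subseq_replicate_iff not_le)
qed

lemma avoid_all_counts:
  assumes "avoid_all n w"
  shows "count_list w True < n" "count_list w False < n"
proof -
  have "avoids w (zero_one_word i (n - i))" if "i \<le> n" for i
    using assms that by (simp add: avoid_all_def)
  from this[of 0] this[of n] show "count_list w True < n" "count_list w False < n"
    by (simp_all add: avoids_def zero_one_word_def subseq_replicate_iff)
qed

lemma avoid_all_length: "avoid_all n w \<Longrightarrow> length w \<le> 2 * n - 2"
  using avoid_all_counts[of n w] length_eq_count_False_True[of w] by linarith

lemma finite_avoid_all: "finite {w. avoid_all n w}"
proof (rule finite_subset)
  show "{w. avoid_all n w} \<subseteq> {w. set w \<subseteq> UNIV \<and> length w \<le> 2 * n - 2}"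
    using avoid_all_length by blast
qed (rule finite_lists_length_le[OF finite_UNIV])

lemma avoid_all_Nil: "avoid_all (Suc m) []"
  by (simp add: avoid_all_iff zero_one_word_def)

lemma avoid_all_False_Cons: "avoid_all (Suc m) (False # w) \<longleftrightarrow> avoid_all m w"
proof -
  have "avoid_all (Suc m) (False # w) \<longleftrightarrow> count_list w True < Suc m \<and> avoid_all m w"
    unfolding avoid_all_iff[of "Suc m"]
    by (auto simp: subseq_zero_one_word_False_Cons avoid_all_def avoids_def less_Suc_eq_le)
  then show ?thesis
    using avoid_all_counts(1)[of m w] less_SucI by blast
qed

lemma avoid_all_True_Cons:
  "avoid_all n (True # w) \<longleftrightarrow> avoid_all n w \<and> Suc (count_list w True) < n"
  unfolding avoid_all_iff by (auto simp: subseq_zero_one_word_True_Cons)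

definition avoid_all_below :: "nat \<Rightarrow> nat \<Rightarrow> bool list set" where
  "avoid_all_below n c = {w. avoid_all n w \<and> count_list w True < c}"

lemma finite_avoid_all_below: "finite (avoid_all_below n c)"
  by (rule finite_subset[OF _ finite_avoid_all]) (auto simp: avoid_all_below_def)

lemma avoid_all_below_0_left: "avoid_all_below 0 c = {}"
  using avoid_all_counts(1)[of 0] by (auto simp: avoid_all_below_def)

lemma avoid_all_below_0_right: "avoid_all_below n 0 = {}"
  by (simp add: avoid_all_below_def)

lemma avoid_all_below_saturated: "n \<le> c \<Longrightarrow> avoid_all_below n c = {w. avoid_all n w}"
  by (auto simp: avoid_all_below_def intro: less_le_trans[OF avoid_all_counts(1)])

lemma avoid_all_below_Suc_Suc:
  assumes "c \<le> m"
  shows "avoid_all_below (Suc m) (Suc c) =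
    insert [] ((#) False ` avoid_all_below m (Suc c) \<union> (#) True ` avoid_all_below (Suc m) c)"
proof (rule set_eqI)
  fix w
  show "w \<in> avoid_all_below (Suc m) (Suc c) \<longleftrightarrow>
    w \<in> insert [] ((#) False ` avoid_all_below m (Suc c) \<union> (#) True ` avoid_all_below (Suc m) c)"
  proof (cases w)
    case Nil
    then show ?thesis by (simp add: avoid_all_below_def avoid_all_Nil)
  next
    case (Cons x v)
    with assms show ?thesis
      by (cases x) (auto simp: avoid_all_below_def avoid_all_False_Cons avoid_all_True_Cons)
  qed
qed

lemma card_avoid_all_below_Suc_Suc:
  assumes "c \<le> m"
  shows "card (avoid_all_below (Suc m) (Suc c)) =
    Suc (card (avoid_all_below m (Suc c)) + card (avoid_all_below (Suc m) c))"
proof -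
  let ?F = "(#) False ` avoid_all_below m (Suc c)" and ?T = "(#) True ` avoid_all_below (Suc m) c"
  have "card (avoid_all_below (Suc m) (Suc c)) = Suc (card (?F \<union> ?T))"
    unfolding avoid_all_below_Suc_Suc[OF assms]
    by (rule card_insert_disjoint) (auto simp: finite_avoid_all_below)
  also have "card (?F \<union> ?T) = card ?F + card ?T"
    by (rule card_Un_disjoint) (auto simp: finite_avoid_all_below)
  also have "card ?F + card ?T = card (avoid_all_below m (Suc c)) + card (avoid_all_below (Suc m) c)"
    by (simp add: card_image)
  finally show ?thesis .
qed

text \<open>The case split avoids the junk value \<open>0 - 1 = 0\<close>, which would subtract
  \<open>n + 1 choose 0 = 1\<close> at \<open>c = 0\<close>.\<close>
definition ballot :: "nat \<Rightarrow> nat \<Rightarrow> int" where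
  "ballot n c = int ((n + 1 + c) choose c) - (case c of 0 \<Rightarrow> 0 | Suc d \<Rightarrow> int ((n + 1 + c) choose d))"

lemma ballot_0_right: "ballot n 0 = 1"
  by (simp add: ballot_def)

lemma ballot_Suc_Suc: "ballot (Suc m) (Suc c) = ballot m (Suc c) + ballot (Suc m) c"
proof (cases c)
  case 0
  then show ?thesis by (simp add: ballot_def)
next
  case (Suc d)
  have "Suc m + 1 + Suc c = Suc (m + 1 + Suc c)" "Suc m + 1 + c = m + 1 + Suc c" by simp_all
  with Suc show ?thesis by (simp only: ballot_def) simp
qed

lemma ballot_diag: "ballot m (Suc m) = ballot m m"
proof (cases m)
  case 0
  then show ?thesis by (simp add: ballot_def)
next
  case (Suc d)
  define N where "N = m + 1 + m"
  have "ballot m (Suc m) = int (Suc N choose Suc m) - int (Suc N choose m)"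
    by (simp only: ballot_def N_def add_Suc_right nat.case)
  also have "(Suc N choose Suc m) = (N choose m) + (N choose Suc m)"
    by (rule binomial_Suc_Suc)
  also have "(N choose Suc m) = (N choose m)"
    using binomial_symmetric[of "Suc m" N] by (simp add: N_def)
  also have "(Suc N choose m) = (N choose d) + (N choose m)"
    by (simp only: Suc binomial_Suc_Suc)
  also have "ballot m m = int (N choose m) - int (N choose d)"
    by (simp only: ballot_def N_def Suc nat.case)
  ultimately show ?thesis by simp
qed

lemma catalan_eq_ballot: "int (catalan (Suc k)) = ballot k (Suc k)"
proof -
  define N where "N = Suc (k + Suc k)"
  define X Y where "X = (N choose Suc k)" and "Y = (N choose k)"
  have "Suc k * X = (k + 2) * Y"
    using Suc_times_binomial_add[of k "Suc k"]
    unfolding X_def Y_def N_def by (simp only: add_2_eq_Suc' add_Suc_right)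
  then have "int (Suc k * X) = int ((k + 2) * Y)"
    by (rule arg_cong)
  then have X: "int X = (int k + 2) * (int X - int Y)"
    by (simp add: algebra_simps)
  have "int (catalan (Suc k)) = int (X div (k + 2))"
    by (simp add: catalan_def X_def N_def mult_2 del: binomial_Suc_Suc)
  also have "\<dots> = int X div (int k + 2)"
    by (simp add: of_nat_div add.commute)
  also have "\<dots> = int X - int Y"
    by (subst X) simp
  also have "\<dots> = ballot k (Suc k)"
    by (simp add: ballot_def X_def Y_def N_def del: binomial_Suc_Suc)
  finally show ?thesis .
qed

lemma card_avoid_all_below:
  "c \<le> Suc n \<Longrightarrow> int (card (avoid_all_below n c)) + 1 = ballot n c"
proof (induction n arbitrary: c)
  case 0
  then consider "c = 0" | "c = 1" by linarith
  then show ?case by cases (simp_all add: avoid_all_below_0_left ballot_def)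
next
  case (Suc m)
  note card_m = Suc.IH
  show ?case using Suc.prems
  proof (induction c)
    case 0
    then show ?case by (simp add: avoid_all_below_0_right ballot_0_right)
  next
    case (Suc c)
    show ?case
    proof (cases "c \<le> m")
      case True
      then show ?thesis
        using Suc.IH Suc.prems card_m[of "Suc c"]
        by (simp add: card_avoid_all_below_Suc_Suc ballot_Suc_Suc)
    next
      case False
      with Suc.prems have "c = Suc m" by simp
      then show ?thesis
        using Suc.IH by (simp add: avoid_all_below_saturated ballot_diag)
    qed
  qed
qed

lemma sum_B_eq_card:
  assumes "2 * k - 2 \<le> N"
  shows "(\<Sum>m = 0..N. B k m) = card {w. avoid_all k w}"
proof -
  have "{w. avoid_all k w} = (\<Union>m\<in>{0..N}. {w. length w = m \<and> avoid_all k w})"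
    using avoid_all_length assms by fastforce
  moreover have "card (\<Union>m\<in>{0..N}. {w. length w = m \<and> avoid_all k w}) =
      (\<Sum>m = 0..N. card {w. length w = m \<and> avoid_all k w})"
    by (rule card_UN_disjoint) (auto intro: finite_subset[OF _ finite_avoid_all])
  ultimately show ?thesis
    by (simp add: B_def)
qed

theorem corollary3p7:
  fixes k :: nat
  assumes "k \<ge> 1"
  shows "finite {w :: bool list. avoid_all k w}
         \<and> card {w :: bool list. avoid_all k w} = catalan (k + 1) - 1
         \<and> (\<Sum>m = 0..2 * k - 2. B k m) = catalan (k + 1) - 1"
proof -
  have "int (card {w. avoid_all k w}) + 1 = int (catalan (k + 1))"
    using card_avoid_all_below[of k k]
    by (simp add: avoid_all_below_saturated ballot_diag catalan_eq_ballot)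
  then have "card {w. avoid_all k w} = catalan (k + 1) - 1"
    by linarith
  then show ?thesis
    using finite_avoid_all sum_B_eq_card[of k "2 * k - 2"] by simp
qed

end
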